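(* Let $n\ge1$ and define $\check{\mathbf{H}}_c,\check{\mathbf{H}}_s\in\mathbb{R}^{n\times n}$ by $(\check{\mathbf{H}}_c)_{j,k}=\frac{1}{\sqrt n}\cos\frac{2jk\pi}{n}$, $(\check{\mathbf{H}}_s)_{j,k}=\frac{1}{\sqrt n}\sin\frac{2jk\pi}{n}$ for $j,k=0,\dots,n-1$, $\check{\mathbf{H}}^{\pm}:=\check{\mathbf{H}}_c\pm\check{\mathbf{H}}_s$, and $\check{\mathbf{F}}:=\check{\mathbf{H}}_c+i\check{\mathbf{H}}_s\in\mathbb{C}^{n\times n}$. Let $\mathbf{A}=\operatorname{Circ}(\mathbf{a})\in\mathbb{R}^{n\times n}$ be a symmetric circulant matrix with first column $\mathbf{a}=(a_k)_{k=0}^{n-1}$, $a_{n-i}=a_i$ for $i=1,\dots,n-1$, and let $\boldsymbol{\Lambda}:=\sqrt n\,\operatorname{Diag}(\check{\mathbf{H}}_c\mathbf{a})$. Then $\check{\mathbf{H}}^+\mathbf{A}\check{\mathbf{H}}^-=\check{\mathbf{H}}^-\mathbf{A}\check{\mathbf{H}}^+=\boldsymbol{\Lambda}\check{\mathbf{F}}^2=\check{\mathbf{F}}^2\boldsymbol{\Lambda}$.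
   Context: $\operatorname{Circ}(\mathbf{a})$ is the circulant matrix with first column $\mathbf{a}$, i.e. $(\mathbf{A})_{j,k}=a_{(j-k)\bmod n}$. $\operatorname{Diag}(\mathbf{v})$ is the diagonal matrix with diagonal $\mathbf{v}$. *)

theory Defs
  imports Complex_Main "Jordan_Normal_Form.Matrix"
begin

definition Hc :: "nat \<Rightarrow> real mat" where
  "Hc n = mat n n (\<lambda>(j,k). cos (2 * real j * real k * pi / real n) / sqrt (real n))"

definition Hs :: "nat \<Rightarrow> real mat" where
  "Hs n = mat n n (\<lambda>(j,k). sin (2 * real j * real k * pi / real n) / sqrt (real n))"

definition Hplus :: "nat \<Rightarrow> real mat" where
  "Hplus n = Hc n + Hs n"

definition Hminus :: "nat \<Rightarrow> real mat" where
  "Hminus n = Hc n - Hs n"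

definition Fmat :: "nat \<Rightarrow> complex mat" where
  "Fmat n = map_mat complex_of_real (Hc n) + \<i> \<cdot>\<^sub>m map_mat complex_of_real (Hs n)"

definition Circ :: "real vec \<Rightarrow> real mat" where
  "Circ a = mat (dim_vec a) (dim_vec a)
     (\<lambda>(j,k). a $ ((j + dim_vec a - k) mod dim_vec a))"

definition Diag :: "'a::zero vec \<Rightarrow> 'a mat" where
  "Diag v = mat (dim_vec v) (dim_vec v) (\<lambda>(j,k). if j = k then v $ j else 0)"

end

theory Submission
  imports Defs
begin

text \<open>
  Write \<open>\<lambda>\<^sub>k = \<Sum>\<^sub>m a\<^sub>m cos (2 m k \<pi> / n)\<close>, so that
  \<open>\<Lambda> = Diag \<lambda>\<close>. The vectors \<open>(cis (2 j k \<pi> / n))\<^sub>j\<close> are eigenvectors of every circulant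
  matrix, with eigenvalue \<open>\<Sum>\<^sub>m a\<^sub>m cis (- 2 m k \<pi> / n)\<close>; when \<open>a\<^sub>n\<^sub>-\<^sub>m = a\<^sub>m\<close> this
  eigenvalue is real and equals \<open>\<lambda>\<^sub>k\<close>. Taking real and imaginary parts,
  \<open>A H\<^sub>c = H\<^sub>c \<Lambda>\<close> and \<open>A H\<^sub>s = H\<^sub>s \<Lambda>\<close>, hence \<open>A H\<^sup>\<plusminus> = H\<^sup>\<plusminus> \<Lambda>\<close>.
  Orthogonality of the roots of unity gives \<open>H\<^sup>+ H\<^sup>- = H\<^sup>- H\<^sup>+ = F\<^sup>2 = R\<close>, the permutation matrix
  of \<open>k \<mapsto> -k mod n\<close>, and \<open>R\<close> commutes with \<open>\<Lambda>\<close> because \<open>\<lambda>\<^sub>n\<^sub>-\<^sub>k = \<lambda>\<^sub>k\<close>.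
  So all four products equal \<open>R \<Lambda> = \<Lambda> R\<close>.
\<close>

lemma sum_cis_roots_of_unity:
  fixes r :: int
  assumes n: "n > 0"
  shows "(\<Sum>m<n. cis (2 * pi * real m * of_int r / real n)) = (if int n dvd r then of_nat n else 0)"
proof (cases "int n dvd r")
  case True
  then obtain q where q: "r = int n * q" by blast
  have "cis (2 * pi * real m * of_int r / real n) = 1" for m
  proof -
    have "2 * pi * real m * of_int r / real n = 2 * pi * of_int (int m * q)"
      using n by (simp add: q field_simps)
    then show ?thesis by (simp del: of_int_mult)
  qed
  then show ?thesis using True by simp
next
  case False
  define w where "w = cis (2 * pi * of_int r / real n)"
  have "w \<noteq> 1"
  proof
    assume "w = 1"
    then have "cos (2 * pi * of_int r / real n) = 1" by (simp add: w_def complex_eq_iff)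
    then obtain k :: int where "2 * pi * of_int r / real n = of_int k * 2 * pi"
      by (auto simp: cos_one_2pi_int)
    then have "of_int r = real n * of_int k" using n by (simp add: field_simps)
    then have "r = int n * k" by (metis of_int_eq_iff of_int_mult of_int_of_nat_eq)
    with False show False by simp
  qed
  have "w ^ n = 1"
    using n cis_multiple_2pi[of "of_int r"] by (simp add: w_def DeMoivre)
  have "(\<Sum>m<n. cis (2 * pi * real m * of_int r / real n)) = (\<Sum>m<n. w ^ m)"
    by (simp add: w_def DeMoivre mult_ac)
  also have "\<dots> = 0"
    using \<open>w \<noteq> 1\<close> \<open>w ^ n = 1\<close> by (simp add: geometric_sum)
  finally show ?thesis using False by simp
qed

lemma sum_cos_roots_of_unity:
  fixes r :: int
  assumes "n > 0"
  shows "(\<Sum>m<n. cos (2 * pi * real m * of_int r / real n)) = (if int n dvd r then real n else 0)"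
  using arg_cong[OF sum_cis_roots_of_unity[OF assms, of r], of Re] by simp

lemma sum_sin_roots_of_unity:
  fixes r :: int
  assumes "n > 0"
  shows "(\<Sum>m<n. sin (2 * pi * real m * of_int r / real n)) = 0"
  using arg_cong[OF sum_cis_roots_of_unity[OF assms, of r], of Im] by simp

lemma index_mult_mat_square:
  assumes "A \<in> carrier_mat n n" "B \<in> carrier_mat n n" "j < n" "k < n"
  shows "(A * B) $$ (j, k) = (\<Sum>m<n. A $$ (j, m) * B $$ (m, k))"
  using assms by (simp add: scalar_prod_def lessThan_atLeast0)

lemma Hc_carrier [simp]: "Hc n \<in> carrier_mat n n"
  and Hs_carrier [simp]: "Hs n \<in> carrier_mat n n"
  by (simp_all add: Hc_def Hs_def)

lemma Hplus_carrier [simp]: "Hplus n \<in> carrier_mat n n"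
  and Hminus_carrier [simp]: "Hminus n \<in> carrier_mat n n"
  and Fmat_carrier [simp]: "Fmat n \<in> carrier_mat n n"
  by (auto simp: Hplus_def Hminus_def Fmat_def minus_carrier_mat)

lemmas dim_Hc_Hs_Fmat [simp] =
  carrier_matD[OF Hc_carrier] carrier_matD[OF Hs_carrier] carrier_matD[OF Hplus_carrier]
  carrier_matD[OF Hminus_carrier] carrier_matD[OF Fmat_carrier]

lemma Circ_carrier: "dim_vec a = n \<Longrightarrow> Circ a \<in> carrier_mat n n"
  by (simp add: Circ_def)

lemma transpose_Hc: "(Hc n)\<^sup>T = Hc n"
  and transpose_Hs: "(Hs n)\<^sup>T = Hs n"
  by (auto simp: Hc_def Hs_def mult_ac)

definition reflection_mat :: "nat \<Rightarrow> 'a::{zero,one} mat" where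
  "reflection_mat n = mat n n (\<lambda>(j, k). if n dvd j + k then 1 else 0)"

lemma reflection_mat_carrier [simp]: "reflection_mat n \<in> carrier_mat n n"
  by (simp add: reflection_mat_def)

lemma dim_reflection_mat [simp]:
  "dim_row (reflection_mat n) = n" "dim_col (reflection_mat n) = n"
  by (simp_all add: reflection_mat_def)

lemma transpose_reflection_mat: "(reflection_mat n)\<^sup>T = reflection_mat n"
  by (auto simp: reflection_mat_def add.commute)

lemma Hplus_mult_Hminus:
  assumes n: "n > 0"
  shows "Hplus n * Hminus n = reflection_mat n"
proof (rule eq_matI)
  fix j k assume "j < dim_row (reflection_mat n :: real mat)" "k < dim_col (reflection_mat n :: real mat)"
  then have jk: "j < n" "k < n" by auto
  have entry: "Hplus n $$ (j, m) * Hminus n $$ (m, k) =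
      (cos (2 * pi * real m * of_int (int j + int k) / real n)
       + sin (2 * pi * real m * of_int (int j - int k) / real n)) / real n" if "m < n" for m
  proof -
    define x y where "x = 2 * real j * real m * pi / real n" and "y = 2 * real m * real k * pi / real n"
    have "Hplus n $$ (j, m) * Hminus n $$ (m, k) = (cos x + sin x) * (cos y - sin y) / real n"
      using jk that by (simp add: Hplus_def Hminus_def Hc_def Hs_def x_def y_def field_simps)
    also have "(cos x + sin x) * (cos y - sin y) = cos (x + y) + sin (x - y)"
      by (simp add: cos_add sin_diff algebra_simps)
    finally show ?thesis
      by (simp add: x_def y_def algebra_simps add_divide_distrib diff_divide_distrib)
  qed
  have "(Hplus n * Hminus n) $$ (j, k) = (\<Sum>m<n. Hplus n $$ (j, m) * Hminus n $$ (m, k))"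
    using jk by (intro index_mult_mat_square) simp_all
  also have "\<dots> = (\<Sum>m<n. (cos (2 * pi * real m * of_int (int j + int k) / real n)
       + sin (2 * pi * real m * of_int (int j - int k) / real n)) / real n)"
    by (rule sum.cong) (simp_all add: entry)
  also have "\<dots> = (if n dvd j + k then 1 else 0)"
    unfolding sum_divide_distrib[symmetric] sum.distrib
      sum_cos_roots_of_unity[OF n] sum_sin_roots_of_unity[OF n]
    using n by (simp flip: of_nat_add)
  finally show "(Hplus n * Hminus n) $$ (j, k) = reflection_mat n $$ (j, k)"
    using jk by (simp add: reflection_mat_def)
qed auto

lemma Hminus_mult_Hplus:
  assumes "n > 0"
  shows "Hminus n * Hplus n = reflection_mat n"
proof -
  have "(Hplus n)\<^sup>T = Hplus n" "(Hminus n)\<^sup>T = Hminus n"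
    by (simp_all add: Hplus_def Hminus_def transpose_add[of _ n n] transpose_minus[of _ n n]
        transpose_Hc transpose_Hs)
  then have "Hminus n * Hplus n = (Hplus n * Hminus n)\<^sup>T"
    by (simp add: transpose_mult[of _ n n _ n])
  then show ?thesis
    using assms by (simp add: Hplus_mult_Hminus transpose_reflection_mat)
qed

lemma Fmat_mult_Fmat:
  assumes n: "n > 0"
  shows "Fmat n * Fmat n = of_real_hom.mat_hom (reflection_mat n)"
proof (rule eq_matI)
  fix j k assume "j < dim_row (of_real_hom.mat_hom (reflection_mat n) :: complex mat)"
    "k < dim_col (of_real_hom.mat_hom (reflection_mat n) :: complex mat)"
  then have jk: "j < n" "k < n" by auto
  have Fmat_entry: "Fmat n $$ (p, q) = cis (2 * real p * real q * pi / real n) / sqrt (real n)"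
    if "p < n" "q < n" for p q
    using that by (simp add: Fmat_def Hc_def Hs_def complex_eq_iff)
  have entry: "Fmat n $$ (j, m) * Fmat n $$ (m, k) =
      cis (2 * pi * real m * of_int (int j + int k) / real n) / of_nat n" if "m < n" for m
    using jk that n by (simp add: Fmat_entry cis_mult algebra_simps add_divide_distrib
        flip: of_real_mult)
  have "(Fmat n * Fmat n) $$ (j, k) = (\<Sum>m<n. Fmat n $$ (j, m) * Fmat n $$ (m, k))"
    using jk by (intro index_mult_mat_square) simp_all
  also have "\<dots> = (\<Sum>m<n. cis (2 * pi * real m * of_int (int j + int k) / real n) / of_nat n)"
    by (rule sum.cong) (simp_all add: entry)
  also have "\<dots> = (if n dvd j + k then 1 else 0)"
    unfolding sum_divide_distrib[symmetric] sum_cis_roots_of_unity[OF n]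
    using n by (simp flip: of_nat_add)
  finally show "(Fmat n * Fmat n) $$ (j, k) = of_real_hom.mat_hom (reflection_mat n) $$ (j, k)"
    using jk by (simp add: reflection_mat_def)
qed auto

lemma cis_angle_mod:
  assumes "n > 0"
  shows "cis (2 * real (x mod n) * real k * pi / real n) = cis (2 * real x * real k * pi / real n)"
proof -
  have "real x = real (x mod n) + real n * real (x div n)"
    by (simp flip: of_nat_mult of_nat_add)
  then have "2 * real x * real k * pi / real n
      = 2 * real (x mod n) * real k * pi / real n + 2 * pi * real (k * (x div n))"
    using assms by (simp add: field_simps)
  then show ?thesis
    by (simp add: cis_mult[symmetric] del: of_nat_mult)
qed

lemma mod_reflect_involution:
  fixes j m n :: nat
  assumes "j < n" "m < n"
  shows "(j + n - (j + n - m) mod n) mod n = m"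
proof (cases "m \<le> j")
  case True
  then have "(j + n - m) mod n = j - m"
    using assms mod_add_self2[of "j - m" n] by (simp add: Nat.add_diff_assoc2)
  moreover have "j + n - (j - m) = m + n" using True assms by linarith
  ultimately show ?thesis using assms by simp
next
  case False
  then have "(j + n - m) mod n = j + n - m"
    using assms by (intro mod_less) linarith
  moreover have "j + n - (j + n - m) = m" using assms by linarith
  ultimately show ?thesis using assms by simp
qed

lemma sum_circulant_cis:
  fixes c :: "nat \<Rightarrow> complex"
  assumes n: "n > 0" and j: "j < n"
  shows "(\<Sum>l<n. c ((j + n - l) mod n) * cis (2 * real l * real k * pi / real n))
    = cis (2 * real j * real k * pi / real n) * (\<Sum>m<n. c m * cis (- (2 * real m * real k * pi / real n)))"
proof -
  have "(\<Sum>l<n. c ((j + n - l) mod n) * cis (2 * real l * real k * pi / real n))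
      = (\<Sum>m<n. c m * cis (2 * real ((j + n - m) mod n) * real k * pi / real n))"
    by (rule sum.reindex_bij_witness[where i = "\<lambda>m. (j + n - m) mod n" and j = "\<lambda>l. (j + n - l) mod n"])
      (simp_all add: j mod_reflect_involution)
  also have "\<dots> = (\<Sum>m<n. cis (2 * real j * real k * pi / real n) * (c m * cis (- (2 * real m * real k * pi / real n))))"
  proof (rule sum.cong)
    fix m assume "m \<in> {..<n}"
    define x y where "x = 2 * real j * real k * pi / real n" and "y = 2 * real m * real k * pi / real n"
    have "cis (2 * real ((j + n - m) mod n) * real k * pi / real n)
        = cis (2 * real (j + n - m) * real k * pi / real n)"
      by (rule cis_angle_mod[OF n])
    also have "2 * real (j + n - m) * real k * pi / real n = (x + - y) + 2 * pi * real k"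
    proof -
      have "real (j + n - m) = real j - real m + real n"
        using \<open>m \<in> {..<n}\<close> by (simp add: of_nat_diff)
      then show ?thesis using n by (simp add: x_def y_def field_simps)
    qed
    also have "cis (x + - y + 2 * pi * real k) = cis x * cis (- y)"
      using cis_multiple_2pi[of "real k"] by (simp only: cis_mult[symmetric] Ints_of_nat simp_thms mult_1_right)
    finally show "c m * cis (2 * real ((j + n - m) mod n) * real k * pi / real n)
        = cis x * (c m * cis (- y))" by (simp only: mult.left_commute)
  qed simp
  also have "\<dots> = cis (2 * real j * real k * pi / real n) * (\<Sum>m<n. c m * cis (- (2 * real m * real k * pi / real n)))"
    by (rule sum_distrib_left[symmetric])
  finally show ?thesis .
qed

definition circ_eigenvalue :: "real vec \<Rightarrow> nat \<Rightarrow> real" where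
  "circ_eigenvalue a k =
    (\<Sum>m<dim_vec a. a $ m * cos (2 * real m * real k * pi / real (dim_vec a)))"

lemma symmetric_vec_mod:
  assumes "\<forall>i\<in>{1..n-1}. a $ (n - i) = a $ i" and "m < n"
  shows "a $ ((n - m) mod n) = a $ m"
  using assms by (cases "m = 0") auto

lemma sum_cis_symmetric:
  assumes n: "n > 0" and dim: "dim_vec a = n" and sym: "\<forall>i\<in>{1..n-1}. a $ (n - i) = a $ i"
  shows "(\<Sum>m<n. of_real (a $ m) * cis (- (2 * real m * real k * pi / real n)))
    = of_real (circ_eigenvalue a k)"
proof -
  let ?S = "\<Sum>m<n. complex_of_real (a $ m) * cis (2 * real m * real k * pi / real n)"
  let ?T = "\<Sum>m<n. complex_of_real (a $ m) * cis (- (2 * real m * real k * pi / real n))"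
  \<comment> \<open>By symmetry, reindexing by \<open>m \<mapsto> -m mod n\<close> (the case \<open>j = 0\<close> of the circulant sum)
      turns \<open>?S\<close> into its conjugate \<open>?T\<close>, so both are real.\<close>
  have "?S = (\<Sum>l<n. complex_of_real (a $ ((0 + n - l) mod n)) * cis (2 * real l * real k * pi / real n))"
    using sym by (intro sum.cong) (simp_all add: symmetric_vec_mod)
  also have "\<dots> = ?T"
    using sum_circulant_cis[OF n, of 0] n by simp
  finally have "?S = ?T" .
  moreover have "Im ?S = (\<Sum>m<n. a $ m * sin (2 * real m * real k * pi / real n))"
    and "Im ?T = - (\<Sum>m<n. a $ m * sin (2 * real m * real k * pi / real n))"
    by (simp_all add: sum_negf)
  ultimately have "Im ?T = 0" by simp
  moreover have "Re ?T = circ_eigenvalue a k"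
    using dim by (simp add: circ_eigenvalue_def)
  ultimately show ?thesis by (simp add: complex_eq_iff)
qed

lemma Circ_eigenvector_sums:
  assumes n: "n > 0" and dim: "dim_vec a = n" and sym: "\<forall>i\<in>{1..n-1}. a $ (n - i) = a $ i"
    and j: "j < n"
  shows "(\<Sum>l<n. a $ ((j + n - l) mod n) * cos (2 * real l * real k * pi / real n))
      = cos (2 * real j * real k * pi / real n) * circ_eigenvalue a k"
    and "(\<Sum>l<n. a $ ((j + n - l) mod n) * sin (2 * real l * real k * pi / real n))
      = sin (2 * real j * real k * pi / real n) * circ_eigenvalue a k"
proof -
  have "(\<Sum>l<n. of_real (a $ ((j + n - l) mod n)) * cis (2 * real l * real k * pi / real n))
      = cis (2 * real j * real k * pi / real n) * of_real (circ_eigenvalue a k)"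
    using sum_circulant_cis[OF n j, of "\<lambda>m. of_real (a $ m)"] sum_cis_symmetric[OF n dim sym]
    by simp
  from arg_cong[OF this, of Re] arg_cong[OF this, of Im] show
    "(\<Sum>l<n. a $ ((j + n - l) mod n) * cos (2 * real l * real k * pi / real n))
      = cos (2 * real j * real k * pi / real n) * circ_eigenvalue a k"
    "(\<Sum>l<n. a $ ((j + n - l) mod n) * sin (2 * real l * real k * pi / real n))
      = sin (2 * real j * real k * pi / real n) * circ_eigenvalue a k"
    by simp_all
qed

lemma Circ_mult_Hc:
  assumes n: "n > 0" and dim: "dim_vec a = n" and sym: "\<forall>i\<in>{1..n-1}. a $ (n - i) = a $ i"
  shows "Circ a * Hc n = Hc n * mat_diag n (circ_eigenvalue a)"
proof (rule eq_matI)
  fix j k assume "j < dim_row (Hc n * mat_diag n (circ_eigenvalue a))"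
    "k < dim_col (Hc n * mat_diag n (circ_eigenvalue a))"
  then have jk: "j < n" "k < n" by (simp_all add: mat_diag_def)
  have "(Circ a * Hc n) $$ (j, k)
      = (\<Sum>l<n. a $ ((j + n - l) mod n) * cos (2 * real l * real k * pi / real n)) / sqrt (real n)"
    using jk dim by (simp add: Circ_def Hc_def scalar_prod_def lessThan_atLeast0 sum_divide_distrib)
  also have "\<dots> = (Hc n * mat_diag n (circ_eigenvalue a)) $$ (j, k)"
    unfolding mat_diag_mult_right[OF Hc_carrier]
    using jk by (simp add: Circ_eigenvector_sums(1)[OF n dim sym] Hc_def)
  finally show "(Circ a * Hc n) $$ (j, k) = (Hc n * mat_diag n (circ_eigenvalue a)) $$ (j, k)" .
qed (use dim in \<open>simp_all add: Circ_def mat_diag_def\<close>)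

lemma Circ_mult_Hs:
  assumes n: "n > 0" and dim: "dim_vec a = n" and sym: "\<forall>i\<in>{1..n-1}. a $ (n - i) = a $ i"
  shows "Circ a * Hs n = Hs n * mat_diag n (circ_eigenvalue a)"
proof (rule eq_matI)
  fix j k assume "j < dim_row (Hs n * mat_diag n (circ_eigenvalue a))"
    "k < dim_col (Hs n * mat_diag n (circ_eigenvalue a))"
  then have jk: "j < n" "k < n" by (simp_all add: mat_diag_def)
  have "(Circ a * Hs n) $$ (j, k)
      = (\<Sum>l<n. a $ ((j + n - l) mod n) * sin (2 * real l * real k * pi / real n)) / sqrt (real n)"
    using jk dim by (simp add: Circ_def Hs_def scalar_prod_def lessThan_atLeast0 sum_divide_distrib)
  also have "\<dots> = (Hs n * mat_diag n (circ_eigenvalue a)) $$ (j, k)"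
    unfolding mat_diag_mult_right[OF Hs_carrier]
    using jk by (simp add: Circ_eigenvector_sums(2)[OF n dim sym] Hs_def)
  finally show "(Circ a * Hs n) $$ (j, k) = (Hs n * mat_diag n (circ_eigenvalue a)) $$ (j, k)" .
qed (use dim in \<open>simp_all add: Circ_def mat_diag_def\<close>)

lemma Circ_mult_Hplus_Hminus:
  assumes "n > 0" and dim: "dim_vec a = n" and "\<forall>i\<in>{1..n-1}. a $ (n - i) = a $ i"
  shows "Circ a * Hplus n = Hplus n * mat_diag n (circ_eigenvalue a)"
    and "Circ a * Hminus n = Hminus n * mat_diag n (circ_eigenvalue a)"
proof -
  let ?D = "mat_diag n (circ_eigenvalue a)"
  have "Circ a * (Hc n + Hs n) = Circ a * Hc n + Circ a * Hs n"
    by (rule mult_add_distrib_mat[OF Circ_carrier[OF dim] Hc_carrier Hs_carrier])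
  also have "\<dots> = (Hc n + Hs n) * ?D"
    using Circ_mult_Hc[OF assms] Circ_mult_Hs[OF assms]
    by (simp add: add_mult_distrib_mat[OF Hc_carrier Hs_carrier mat_diag_dim])
  finally show "Circ a * Hplus n = Hplus n * ?D" by (simp add: Hplus_def)
  have "Circ a * (Hc n - Hs n) = Circ a * Hc n - Circ a * Hs n"
    by (rule mult_minus_distrib_mat[OF Circ_carrier[OF dim] Hc_carrier Hs_carrier])
  also have "\<dots> = (Hc n - Hs n) * ?D"
    using Circ_mult_Hc[OF assms] Circ_mult_Hs[OF assms]
    by (simp add: minus_mult_distrib_mat[OF Hc_carrier Hs_carrier mat_diag_dim])
  finally show "Circ a * Hminus n = Hminus n * ?D" by (simp add: Hminus_def)
qed

lemma sqrt_smult_Diag_Hc: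
  assumes "n > 0" and "dim_vec a = n"
  shows "sqrt (real n) \<cdot>\<^sub>m Diag (Hc n *\<^sub>v a) = mat_diag n (circ_eigenvalue a)"
proof (rule eq_matI)
  fix j k assume "j < dim_row (mat_diag n (circ_eigenvalue a))" "k < dim_col (mat_diag n (circ_eigenvalue a))"
  then have jk: "j < n" "k < n" by (simp_all add: mat_diag_def)
  have "sqrt (real n) * (Hc n *\<^sub>v a) $ k = circ_eigenvalue a k"
    using jk assms by (simp add: Hc_def scalar_prod_def circ_eigenvalue_def lessThan_atLeast0
        sum_distrib_left mult_ac)
  then show "(sqrt (real n) \<cdot>\<^sub>m Diag (Hc n *\<^sub>v a)) $$ (j, k) = mat_diag n (circ_eigenvalue a) $$ (j, k)"
    using jk by (simp add: Diag_def mat_diag_def)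
qed (simp_all add: Diag_def mat_diag_def)

lemma circ_eigenvalue_reflect:
  assumes "k \<le> dim_vec a"
  shows "circ_eigenvalue a (dim_vec a - k) = circ_eigenvalue a k"
proof -
  define n where "n = dim_vec a"
  have "k \<le> n" using assms by (simp add: n_def)
  have "cos (2 * real m * real (n - k) * pi / real n) = cos (2 * real m * real k * pi / real n)"
    if "n > 0" for m
  proof -
    have "real (n - k) = real n - real k" "real n \<noteq> 0"
      using \<open>k \<le> n\<close> that by (simp_all add: of_nat_diff)
    then have "2 * real m * real (n - k) * pi / real n = 2 * real m * pi - 2 * real m * real k * pi / real n"
      by (simp add: field_simps)
    then show ?thesis by (simp add: cos_diff)
  qed
  then show ?thesis
    by (cases "n = 0") (simp_all add: circ_eigenvalue_def flip: n_def)
qed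

lemma dvd_add_less_cases:
  fixes j k n :: nat
  assumes "j < n" "k < n" "n dvd j + k"
  shows "j + k = 0 \<or> j + k = n"
proof -
  obtain q where q: "j + k = n * q" using assms(3) by (elim dvdE)
  then have "q < 2" using assms(1,2) by (metis add_less_mono mult_2_right mult_less_cancel1)
  then show ?thesis using q by (auto simp: less_2_cases_iff)
qed

lemma reflection_mat_mult_mat_diag:
  fixes d :: "nat \<Rightarrow> 'a::semiring_1"
  assumes "\<forall>k\<in>{1..n-1}. d (n - k) = d k"
  shows "reflection_mat n * mat_diag n d = mat_diag n d * reflection_mat n"
proof -
  have "d j = d k" if "j < n" "k < n" "n dvd j + k" for j k
    using dvd_add_less_cases[OF that]
  proof
    assume "j + k = n"
    then show ?thesis using that assms[rule_format, of k] by (cases "k = 0") auto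
  qed simp
  then show ?thesis
    unfolding mat_diag_mult_right[OF reflection_mat_carrier] mat_diag_mult_left[OF reflection_mat_carrier]
    by (auto simp: reflection_mat_def intro!: eq_matI)
qed

lemma Hplus_Circ_Hminus:
  assumes n: "n > 0" and dim: "dim_vec a = n" and sym: "\<forall>i\<in>{1..n-1}. a $ (n - i) = a $ i"
  shows "Hplus n * Circ a * Hminus n = reflection_mat n * mat_diag n (circ_eigenvalue a)"
    and "Hminus n * Circ a * Hplus n = reflection_mat n * mat_diag n (circ_eigenvalue a)"
proof -
  note C = Circ_carrier[OF dim]
  have "Hplus n * Circ a * Hminus n = Hplus n * (Circ a * Hminus n)"
    by (rule assoc_mult_mat[OF Hplus_carrier C Hminus_carrier])
  also have "\<dots> = Hplus n * Hminus n * mat_diag n (circ_eigenvalue a)"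
    by (simp add: Circ_mult_Hplus_Hminus(2)[OF n dim sym] assoc_mult_mat[OF Hplus_carrier Hminus_carrier mat_diag_dim])
  finally show "Hplus n * Circ a * Hminus n = reflection_mat n * mat_diag n (circ_eigenvalue a)"
    by (simp add: Hplus_mult_Hminus[OF n])
  have "Hminus n * Circ a * Hplus n = Hminus n * (Circ a * Hplus n)"
    by (rule assoc_mult_mat[OF Hminus_carrier C Hplus_carrier])
  also have "\<dots> = Hminus n * Hplus n * mat_diag n (circ_eigenvalue a)"
    by (simp add: Circ_mult_Hplus_Hminus(1)[OF n dim sym] assoc_mult_mat[OF Hminus_carrier Hplus_carrier mat_diag_dim])
  finally show "Hminus n * Circ a * Hplus n = reflection_mat n * mat_diag n (circ_eigenvalue a)"
    by (simp add: Hminus_mult_Hplus[OF n])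
qed

theorem mainTheorem5:
  fixes n :: nat and a :: "real vec"
  assumes "n \<ge> 1"
    and "dim_vec a = n"
    and "\<forall>i\<in>{1..n-1}. a $ (n - i) = a $ i"
  defines "\<Lambda> \<equiv> sqrt (real n) \<cdot>\<^sub>m Diag (Hc n *\<^sub>v a)"
  shows "Hplus n * Circ a * Hminus n = Hminus n * Circ a * Hplus n
    \<and> map_mat complex_of_real (Hplus n * Circ a * Hminus n)
        = map_mat complex_of_real \<Lambda> * (Fmat n * Fmat n)
    \<and> map_mat complex_of_real \<Lambda> * (Fmat n * Fmat n)
        = (Fmat n * Fmat n) * map_mat complex_of_real \<Lambda>"
proof -
  have n: "n > 0" using assms(1) by simp
  let ?D = "mat_diag n (circ_eigenvalue a)" and ?R = "reflection_mat n :: real mat"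
  have \<Lambda>: "\<Lambda> = ?D"
    unfolding \<Lambda>_def using n assms(2) by (rule sqrt_smult_Diag_Hc)
  have RD: "?R * ?D = ?D * ?R"
    using circ_eigenvalue_reflect[of _ a] assms(2) by (intro reflection_mat_mult_mat_diag) auto
  have "of_real_hom.mat_hom (?R * ?D) = of_real_hom.mat_hom \<Lambda> * (Fmat n * Fmat n)"
    "of_real_hom.mat_hom \<Lambda> * (Fmat n * Fmat n) = (Fmat n * Fmat n) * of_real_hom.mat_hom \<Lambda>"
    unfolding \<Lambda> Fmat_mult_Fmat[OF n]
    by (simp_all add: RD flip: of_real_hom.mat_hom_mult[of _ n n _ n])
  then show ?thesis using Hplus_Circ_Hminus[OF n assms(2,3)] by simp
qed

end
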